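(* Let $t\ge 3$ and let $\mathcal{A}=\{A_1,\ldots,A_\alpha\}$ be a nontrivial clutter on $E_t=\{1,\ldots,t\}$. Then (i) $\boldsymbol{\gamma}(\mathcal{A}^{\triangledown})=\mathrm{T}^{(+)}_{2^t}-\prod^{\ast}_{i\in[\alpha]}\Bigl(\mathrm{T}^{(+)}_{2^t}-\prod^{\ast}_{a\in A_i}\tfrac12\bigl(\mathrm{T}^{(+)}_{2^t}-\boldsymbol{x}(\boldsymbol{\mathfrak{a}}(a))\cdot\mathbf{M}\bigr)\Bigr)$; (ii) $\boldsymbol{\gamma}(\mathfrak{B}(\mathcal{A})^{\triangledown})=\Bigl(\prod^{\ast}_{i\in[\alpha]}\Bigl(\mathrm{T}^{(+)}_{2^t}-\prod^{\ast}_{a\in A_i}\tfrac12\bigl(\mathrm{T}^{(+)}_{2^t}-\boldsymbol{x}(\boldsymbol{\mathfrak{a}}(a))\cdot\mathbf{M}\bigr)\Bigr)\Bigr)\cdot\overline{\mathbf{U}}(2^t)$.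
   Context: A clutter on $E_t$ is a family of subsets of $E_t$ none of which contains another; nontrivial means neither the empty family nor $\{\emptyset\}$. $\mathcal{C}^{\triangledown}:=\{D\subseteq E_t: D\supseteq C\text{ for some }C\in\mathcal{C}\}$; the blocker $\mathfrak{B}(\mathcal{A})$ is the family of inclusion-minimal sets meeting every member of $\mathcal{A}$. Order the $2^t$ subsets of $E_t$ by increasing cardinality, lexicographically within equal cardinality; $\boldsymbol{\gamma}(\mathcal{F})\in\{0,1\}^{2^t}$ has $k$-th entry $1$ iff the $k$-th subset lies in $\mathcal{F}$; $T_{\mathcal{F}}:=\mathrm{T}^{(+)}_{2^t}-2\boldsymbol{\gamma}(\mathcal{F})$, with $\mathrm{T}^{(+)}_{2^t}$ the all-ones row vector. For $a\in E_t$, $\boldsymbol{\mathfrak{a}}(a):=T_{\{\{a\}\}^{\triangledown}}$ (characteristic tope of the family of all subsets containing $a$). $\mathbf{M}$ is the $2^t\times 2^t$ matrix whose rows are $R^0,\ldots,R^{2^t-1}$, where $R^0:=\mathrm{T}^{(+)}_{2^t}$ and $R^s$ ($1\le s\le 2^t-1$) has entries $-1$ in positions $1,\ldots,s$ and $1$ elsewhere; for $T\in\{1,-1\}^{2^t}$, $\boldsymbol{x}(T):=T\mathbf{M}^{-1}$ (the unique vector with $T=\boldsymbol{x}(T)\mathbf{M}$). $\prod^{\ast}$ is the componentwise product; $\overline{\mathbf{U}}(2^t)$ is the backward identity matrix of order $2^t$ ($(i,j)$ entry $\delta_{i+j,2^t+1}$). *)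

theory Defs
  imports "Jordan_Normal_Form.Matrix" "HOL-Library.List_Lexorder" "HOL-Library.Product_Lexorder"
begin

(* Indices of vectors/matrices are 0-based here: paper position k (1..2^t) is index k-1. *)

definition clutter :: "nat \<Rightarrow> nat set set \<Rightarrow> bool" where
  "clutter t \<A> \<longleftrightarrow> (\<forall>A\<in>\<A>. A \<subseteq> {1..t}) \<and> (\<forall>A\<in>\<A>. \<forall>B\<in>\<A>. A \<subseteq> B \<longrightarrow> A = B)"

definition nontrivial_clutter :: "nat \<Rightarrow> nat set set \<Rightarrow> bool" where
  "nontrivial_clutter t \<A> \<longleftrightarrow> clutter t \<A> \<and> \<A> \<noteq> {} \<and> \<A> \<noteq> {{}}"

definition up :: "nat \<Rightarrow> nat set set \<Rightarrow> nat set set" where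
  "up t \<C> = {D. D \<subseteq> {1..t} \<and> (\<exists>C\<in>\<C>. C \<subseteq> D)}"

definition blocker :: "nat \<Rightarrow> nat set set \<Rightarrow> nat set set" where
  "blocker t \<A> = {B. B \<subseteq> {1..t} \<and> (\<forall>A\<in>\<A>. B \<inter> A \<noteq> {})
      \<and> (\<forall>B'. B' \<subset> B \<longrightarrow> \<not> (\<forall>A\<in>\<A>. B' \<inter> A \<noteq> {}))}"

definition subset_enum :: "nat \<Rightarrow> nat list list" where
  "subset_enum t = sort_key (\<lambda>xs. (length xs, xs)) (subseqs [1..<t+1])"

definition kth_subset :: "nat \<Rightarrow> nat \<Rightarrow> nat set" where
  "kth_subset t k = set (subset_enum t ! k)"

definition gamma :: "nat \<Rightarrow> nat set set \<Rightarrow> real vec" where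
  "gamma t \<F> = vec (2^t) (\<lambda>k. if kth_subset t k \<in> \<F> then 1 else 0)"

definition Tplus :: "nat \<Rightarrow> real vec" where
  "Tplus t = vec (2^t) (\<lambda>_. 1)"

definition tope :: "nat \<Rightarrow> nat set set \<Rightarrow> real vec" where
  "tope t \<F> = Tplus t - 2 \<cdot>\<^sub>v gamma t \<F>"

definition afrak :: "nat \<Rightarrow> nat \<Rightarrow> real vec" where
  "afrak t a = tope t (up t {{a}})"

definition vecmat :: "real vec \<Rightarrow> real mat \<Rightarrow> real vec" where
  "vecmat v M = vec (dim_col M) (\<lambda>j. v \<bullet> col M j)"

definition Mmat :: "nat \<Rightarrow> real mat" where
  "Mmat t = mat (2^t) (2^t) (\<lambda>(s,j). if j < s then -1 else 1)"

definition xvec :: "nat \<Rightarrow> real vec \<Rightarrow> real vec" where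
  "xvec t T = (THE x. x \<in> carrier_vec (2^t) \<and> T = vecmat x (Mmat t))"

definition cprod :: "nat \<Rightarrow> 'i set \<Rightarrow> ('i \<Rightarrow> real vec) \<Rightarrow> real vec" where
  "cprod n I f = vec n (\<lambda>k. \<Prod>i\<in>I. f i $ k)"

definition Ubar :: "nat \<Rightarrow> real mat" where
  "Ubar t = mat (2^t) (2^t) (\<lambda>(i,j). if i + j = 2^t - 1 then 1 else 0)"

end

theory Submission
  imports Defs "HOL-Library.Sublist"
begin

(* As M is invertible, x(a(a)) M = a(a), so (T+ - x(a(a)) M) / 2 is the indicator of the
   sets containing a.  Componentwise products of indicators are indicators of intersections
   and T+ - gamma F is the indicator of the complementary family, so the inner product over
   the A_i is the indicator of the sets containing no A_i: this gives (i).  For (ii),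
   multiplication by the backward identity reverses the coordinates, and reversing the
   enumeration of subsets by cardinality and then lexicographically amounts to complementing
   each subset; finally a set meets every A_i, i.e. lies in the up-closure of the blocker,
   iff its complement contains no A_i. *)

lemma sorted_lex_less_iff_Min_sym_diff:
  fixes xs ys :: "'a::linorder list"
  assumes "sorted_wrt (<) xs" "sorted_wrt (<) ys" "length xs = length ys" "xs \<noteq> ys"
  shows "xs < ys \<longleftrightarrow> Min (sym_diff (set xs) (set ys)) \<in> set xs"
  using assms
proof (induction xs arbitrary: ys)
  case Nil
  then show ?case by simp
next
  case (Cons x xs)
  then obtain y ys' where ys: "ys = y # ys'"
    by (cases ys) auto
  let ?D = "sym_diff (set (x # xs)) (set ys)"
  have x_least: "\<forall>z\<in>set xs. x < z" and y_least: "\<forall>z\<in>set ys'. y < z"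
    using Cons.prems(1,2) ys by simp_all
  show ?case
  proof (cases "x = y")
    case True
    have "xs \<noteq> ys'"
      using Cons.prems(4) ys True by simp
    then have "set xs \<noteq> set ys'"
      using strict_sorted_equal[of xs ys'] Cons.prems(1,2) ys by auto
    moreover have D: "?D = sym_diff (set xs) (set ys')"
      using x_least y_least ys True by auto
    ultimately have "Min ?D \<in> ?D"
      by (intro Min_in) auto
    then have "Min ?D \<in> set (x # xs) \<longleftrightarrow> Min ?D \<in> set xs"
      using ys True by auto
    then show ?thesis
      using Cons.IH[of ys'] Cons.prems \<open>xs \<noteq> ys'\<close> D ys True by simp
  next
    case False
    have "Min ?D = min x y"
    proof (rule Min_eqI)
      show "min x y \<in> ?D"
        using False x_least y_least ys by (auto simp: min_def)
      show "min x y \<le> z" if "z \<in> ?D" for z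
        using that x_least y_least ys by (auto simp: min_def)
    qed simp
    then show ?thesis
      using False x_least ys by (auto simp: min_def)
  qed
qed

definition sorted_lists_in :: "'a::linorder set \<Rightarrow> 'a list set" where
  "sorted_lists_in E = {xs. sorted_wrt (<) xs \<and> set xs \<subseteq> E}"

definition compl_list :: "'a::linorder set \<Rightarrow> 'a list \<Rightarrow> 'a list" where
  "compl_list E xs = sorted_list_of_set (E - set xs)"

lemma set_compl_list: "finite E \<Longrightarrow> set (compl_list E xs) = E - set xs"
  by (simp add: compl_list_def)

lemma compl_list_in_sorted_lists: "finite E \<Longrightarrow> compl_list E xs \<in> sorted_lists_in E"
  by (auto simp: compl_list_def sorted_lists_in_def)

lemma compl_list_compl_list:
  assumes "finite E" "xs \<in> sorted_lists_in E"
  shows "compl_list E (compl_list E xs) = xs"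
proof -
  have "E - (E - set xs) = set xs"
    using assms(2) by (auto simp: sorted_lists_in_def)
  then show ?thesis
    using assms by (simp add: compl_list_def sorted_lists_in_def sorted_list_of_set_sort_remdups
        strict_sorted_iff distinct_remdups_id sorted_sort_id)
qed

lemma length_sorted_lists_in:
  assumes "finite E" "xs \<in> sorted_lists_in E"
  shows "length xs = card (set xs)" "length xs \<le> card E"
  using assms distinct_card[of xs] card_mono[of E "set xs"]
  by (auto simp: sorted_lists_in_def strict_sorted_iff)

lemma length_compl_list:
  assumes "finite E" "xs \<in> sorted_lists_in E"
  shows "length (compl_list E xs) = card E - length xs"
  using assms length_sorted_lists_in[OF assms]
  by (simp add: compl_list_def sorted_lists_in_def card_Diff_subset finite_subset)

(* For lists of equal length, complementation in E keeps the symmetric difference and moves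
   its minimum to the other list, so by sorted_lex_less_iff_Min_sym_diff it reverses the
   lexicographic order. *)
lemma compl_list_reverses_size_lex:
  assumes E: "finite E" and xs: "xs \<in> sorted_lists_in E" and ys: "ys \<in> sorted_lists_in E"
    and less: "(length xs, xs) < (length ys, ys)"
  shows "(length (compl_list E ys), compl_list E ys)
    < (length (compl_list E xs), compl_list E xs)"
proof (cases "length xs = length ys")
  case False
  then show ?thesis
    using less length_compl_list[OF E xs] length_compl_list[OF E ys]
      length_sorted_lists_in[OF E ys] by auto
next
  case True
  let ?xs' = "compl_list E xs" and ?ys' = "compl_list E ys"
  let ?D = "sym_diff (set xs) (set ys)"
  have strict: "sorted_wrt (<) xs" "sorted_wrt (<) ys" "sorted_wrt (<) ?xs'" "sorted_wrt (<) ?ys'"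
    using xs ys compl_list_in_sorted_lists[OF E] by (auto simp: sorted_lists_in_def)
  have "xs < ys" "xs \<noteq> ys"
    using less True by auto
  have "Min ?D \<in> ?D"
    using strict_sorted_equal[OF strict(2,1)] \<open>xs \<noteq> ys\<close> by (intro Min_in) auto
  moreover have "Min ?D \<in> set xs"
    using sorted_lex_less_iff_Min_sym_diff[OF strict(1,2) True] \<open>xs < ys\<close> \<open>xs \<noteq> ys\<close>
    by simp
  ultimately have "Min ?D \<in> set ?ys'"
    using xs set_compl_list[OF E] by (auto simp: sorted_lists_in_def)
  moreover have "sym_diff (set ?ys') (set ?xs') = ?D"
    using xs ys set_compl_list[OF E] by (auto simp: sorted_lists_in_def)
  moreover have "?ys' \<noteq> ?xs'"
    using compl_list_compl_list[OF E] xs ys \<open>xs \<noteq> ys\<close> by metis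
  moreover have "length ?ys' = length ?xs'"
    using length_compl_list[OF E] xs ys True by simp
  ultimately show ?thesis
    using sorted_lex_less_iff_Min_sym_diff[OF strict(4,3)] by simp
qed

lemma rev_map_eq_if_order_reversing:
  fixes f :: "'a \<Rightarrow> 'b::linorder"
  assumes sorted: "sorted_wrt (\<lambda>x y. f x < f y) xs"
    and onto: "g ` set xs = set xs"
    and reversing:
      "\<And>x y. x \<in> set xs \<Longrightarrow> y \<in> set xs \<Longrightarrow> f x < f y \<Longrightarrow> f (g y) < f (g x)"
    and inj: "inj_on f (set xs)"
  shows "rev (map g xs) = xs"
proof -
  have "sorted_wrt (<) (map f xs)"
    using sorted unfolding sorted_wrt_map .
  moreover have "sorted_wrt (\<lambda>x y. f (g y) < f (g x)) xs"
    using sorted by (rule sorted_wrt_mono_rel[rotated]) (rule reversing)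
  then have "sorted_wrt (<) (map f (rev (map g xs)))"
    unfolding sorted_wrt_map sorted_wrt_rev rev_map[symmetric] .
  moreover have "set (map f (rev (map g xs))) = set (map f xs)"
    using onto by (simp add: image_image)
  ultimately have "map f (rev (map g xs)) = map f xs"
    by (rule strict_sorted_equal)
  moreover have "set (rev (map g xs)) = set xs"
    using onto by simp
  ultimately show ?thesis
    using inj inj_on_map_eq_map[of f "rev (map g xs)" xs] by simp
qed

lemma set_subseqs_strict_sorted:
  fixes xs :: "'a::linorder list"
  assumes "sorted_wrt (<) xs"
  shows "set (subseqs xs) = sorted_lists_in (set xs)"
proof (intro equalityI subsetI)
  fix ys assume "ys \<in> set (subseqs xs)"
  then obtain N where "ys = nths xs N"
    using subseq_conv_nths by auto
  then show "ys \<in> sorted_lists_in (set xs)"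
    using assms set_nths_subset[of xs N] sorted_nths[of xs N] distinct_nthsI[of xs N]
    by (auto simp: sorted_lists_in_def strict_sorted_iff)
next
  fix ys assume "ys \<in> sorted_lists_in (set xs)"
  then show "ys \<in> set (subseqs xs)"
    using assms sorted_subset_imp_subseq[of ys xs]
    by (auto simp: sorted_lists_in_def strict_sorted_iff sorted_wrt_mono_rel)
qed

lemma compl_list_image:
  assumes "finite E"
  shows "compl_list E ` sorted_lists_in E = sorted_lists_in E"
  using compl_list_in_sorted_lists[OF assms] compl_list_compl_list[OF assms]
  by (metis (no_types, lifting) image_iff subsetI subset_antisym)

lemma set_subset_enum: "set (subset_enum t) = sorted_lists_in {1..t}"
  unfolding subset_enum_def set_sort set_subseqs_strict_sorted[OF sorted_wrt_upt] set_upt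
  by (simp add: atLeastLessThanSuc_atLeastAtMost)

lemma length_subset_enum: "length (subset_enum t) = 2^t"
  by (simp add: subset_enum_def length_subseqs)

lemma sorted_subset_enum:
  "sorted_wrt (\<lambda>xs ys. (length xs, xs) < (length ys, ys)) (subset_enum t)"
proof -
  have "distinct (subset_enum t)"
    using distinct_set_subseqs[of "[1..<t+1]"] by (simp add: subset_enum_def distinct_map)
  then have "distinct (map (\<lambda>xs. (length xs, xs)) (subset_enum t))"
    by (simp add: distinct_map inj_on_def)
  moreover have "sorted (map (\<lambda>xs. (length xs, xs)) (subset_enum t))"
    by (simp add: subset_enum_def)
  ultimately have "sorted_wrt (<) (map (\<lambda>xs. (length xs, xs)) (subset_enum t))"
    by (simp add: strict_sorted_iff)
  then show ?thesis
    unfolding sorted_wrt_map .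
qed

lemma rev_map_compl_list_subset_enum:
  "rev (map (compl_list {1..t}) (subset_enum t)) = subset_enum t"
proof (rule rev_map_eq_if_order_reversing[where f = "\<lambda>xs. (length xs, xs)"])
  show "sorted_wrt (\<lambda>xs ys. (length xs, xs) < (length ys, ys)) (subset_enum t)"
    by (rule sorted_subset_enum)
  show "compl_list {1..t} ` set (subset_enum t) = set (subset_enum t)"
    unfolding set_subset_enum by (rule compl_list_image) simp
  show "(length (compl_list {1..t} ys), compl_list {1..t} ys)
      < (length (compl_list {1..t} xs), compl_list {1..t} xs)"
    if "xs \<in> set (subset_enum t)" "ys \<in> set (subset_enum t)"
      "(length xs, xs) < (length ys, ys)" for xs ys
    using that unfolding set_subset_enum by (intro compl_list_reverses_size_lex) simp_all
  show "inj_on (\<lambda>xs. (length xs, xs)) (set (subset_enum t))"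
    by (simp add: inj_on_def)
qed

lemma kth_subset_subset: "k < 2^t \<Longrightarrow> kth_subset t k \<subseteq> {1..t}"
  using nth_mem[of k "subset_enum t"]
  by (auto simp: kth_subset_def set_subset_enum length_subset_enum sorted_lists_in_def)

lemma kth_subset_complement:
  assumes "k < 2^t"
  shows "kth_subset t (2^t - 1 - k) = {1..t} - kth_subset t k"
proof -
  have "subset_enum t ! (2^t - 1 - k)
      = rev (map (compl_list {1..t}) (subset_enum t)) ! (2^t - 1 - k)"
    by (simp only: rev_map_compl_list_subset_enum)
  also have "\<dots> = compl_list {1..t} (subset_enum t ! k)"
    using assms by (simp add: rev_nth length_subset_enum)
  finally show ?thesis
    by (simp add: kth_subset_def set_compl_list)
qed

definition staircase_mat :: "nat \<Rightarrow> real mat" where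
  "staircase_mat n = mat n n (\<lambda>(s, j). if j < s then -1 else 1)"

lemma Mmat_eq_staircase_mat: "Mmat t = staircase_mat (2^t)"
  by (simp add: Mmat_def staircase_mat_def)

lemma vecmat_staircase_mat_nth:
  assumes "x \<in> carrier_vec n" "j < n"
  shows "vecmat x (staircase_mat n) $ j = 2 * (\<Sum>s<Suc j. x $ s) - (\<Sum>s<n. x $ s)"
proof -
  have prefix: "(\<Sum>s<Suc j. x $ s) = (\<Sum>s<n. if s \<in> {..<Suc j} then x $ s else 0)"
  proof -
    have "{..<n} \<inter> {..<Suc j} = {..<Suc j}"
      using assms(2) by auto
    then show ?thesis
      using sum.inter_restrict[of "{..<n}" "\<lambda>s. x $ s" "{..<Suc j}"] by simp
  qed
  have "vecmat x (staircase_mat n) $ j = (\<Sum>s<n. x $ s * (if j < s then -1 else 1))"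
    using assms by (simp add: vecmat_def staircase_mat_def scalar_prod_def atLeast0LessThan)
  also have "\<dots> = (\<Sum>s<n. 2 * (if s \<in> {..<Suc j} then x $ s else 0) - x $ s)"
    by (intro sum.cong) auto
  also have "\<dots> = 2 * (\<Sum>s<Suc j. x $ s) - (\<Sum>s<n. x $ s)"
    unfolding prefix sum_subtractf sum_distrib_left ..
  finally show ?thesis .
qed

lemma vecmat_staircase_mat_surj:
  assumes "T \<in> carrier_vec n" "0 < n"
  shows "\<exists>x\<in>carrier_vec n. vecmat x (staircase_mat n) = T"
proof
  define x where
    "x = vec n (\<lambda>s. if s = 0 then (T $ 0 + T $ (n - 1)) / 2 else (T $ s - T $ (s - 1)) / 2)"
  show x_carrier: "x \<in> carrier_vec n"
    by (simp add: x_def)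
  have prefix: "2 * (\<Sum>s<Suc j. x $ s) = T $ j + T $ (n - 1)" if "j < n" for j
    using that
  proof (induction j)
    case (Suc j)
    have "2 * (\<Sum>s<Suc j. x $ s) = T $ j + T $ (n - 1)"
      using Suc by simp
    moreover have "2 * x $ Suc j = T $ Suc j - T $ j"
      using Suc.prems by (simp add: x_def)
    ultimately show ?case
      unfolding sum.lessThan_Suc[of _ "Suc j"] distrib_left by linarith
  qed (simp add: x_def)
  have total: "(\<Sum>s<n. x $ s) = T $ (n - 1)"
    using prefix[of "n - 1"] assms(2) by simp
  show "vecmat x (staircase_mat n) = T"
  proof (rule eq_vecI)
    fix j assume "j < dim_vec T"
    then have j: "j < n"
      using assms(1) by simp
    show "vecmat x (staircase_mat n) $ j = T $ j"
      unfolding vecmat_staircase_mat_nth[OF x_carrier j] prefix[OF j] total by simp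
  qed (use assms(1) in \<open>simp add: vecmat_def staircase_mat_def\<close>)
qed

lemma vecmat_staircase_mat_inj:
  assumes x: "x \<in> carrier_vec n" and y: "y \<in> carrier_vec n"
    and eq: "vecmat x (staircase_mat n) = vecmat y (staircase_mat n)"
  shows "x = y"
proof -
  have step: "2 * (\<Sum>s<Suc j. x $ s) - (\<Sum>s<n. x $ s)
      = 2 * (\<Sum>s<Suc j. y $ s) - (\<Sum>s<n. y $ s)" if "j < n" for j
    using vecmat_staircase_mat_nth[OF x that] vecmat_staircase_mat_nth[OF y that] eq by simp
  have total: "(\<Sum>s<n. x $ s) = (\<Sum>s<n. y $ s)"
  proof (cases n)
    case (Suc m)
    then show ?thesis
      using step[of m] by simp
  qed simp
  have prefix: "(\<Sum>s<j. x $ s) = (\<Sum>s<j. y $ s)" if "j \<le> n" for j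
  proof (cases j)
    case (Suc i)
    then show ?thesis
      using step[of i] total that by simp
  qed simp
  show ?thesis
  proof (rule eq_vecI)
    fix j assume "j < dim_vec y"
    then have "j < n"
      using y by simp
    then show "x $ j = y $ j"
      using prefix[of "Suc j"] prefix[of j] by simp
  qed (use x y in simp)
qed

lemma vecmat_xvec:
  assumes "T \<in> carrier_vec (2^t)"
  shows "vecmat (xvec t T) (Mmat t) = T"
proof -
  have "\<exists>!x. x \<in> carrier_vec (2^t) \<and> T = vecmat x (Mmat t)"
    using vecmat_staircase_mat_surj[OF assms] vecmat_staircase_mat_inj
    unfolding Mmat_eq_staircase_mat by auto
  from theI'[OF this] show ?thesis
    unfolding xvec_def by simp
qed

lemma tope_carrier: "tope t F \<in> carrier_vec (2^t)"
  by (simp add: tope_def Tplus_def gamma_def)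

lemma gamma_nth: "k < 2^t \<Longrightarrow> gamma t F $ k = (if kth_subset t k \<in> F then 1 else 0)"
  by (simp add: gamma_def)

lemma gamma_cong:
  assumes "\<And>S. S \<subseteq> {1..t} \<Longrightarrow> S \<in> F \<longleftrightarrow> S \<in> G"
  shows "gamma t F = gamma t G"
proof (rule eq_vecI)
  fix k assume "k < dim_vec (gamma t G)"
  then have "k < 2^t"
    by (simp add: gamma_def)
  then show "gamma t F $ k = gamma t G $ k"
    using assms[OF kth_subset_subset] by (simp add: gamma_nth)
qed (simp add: gamma_def)

lemma Tplus_minus_gamma: "Tplus t - gamma t F = gamma t (- F)"
  by (intro eq_vecI) (auto simp: Tplus_def gamma_def)

lemma cprod_cong: "(\<And>i. i \<in> I \<Longrightarrow> f i = g i) \<Longrightarrow> cprod n I f = cprod n I g"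
  unfolding cprod_def by (metis (no_types, lifting) prod.cong)

lemma cprod_gamma:
  assumes "finite I"
  shows "cprod (2^t) I (\<lambda>i. gamma t (F i)) = gamma t (\<Inter>i\<in>I. F i)"
proof (rule eq_vecI)
  fix k assume "k < dim_vec (gamma t (\<Inter>i\<in>I. F i))"
  then have k: "k < 2^t"
    by (simp add: gamma_def)
  have "cprod (2^t) I (\<lambda>i. gamma t (F i)) $ k
      = (\<Prod>i\<in>I. if kth_subset t k \<in> F i then 1 else 0)"
    using k by (simp add: cprod_def gamma_nth)
  also have "\<dots> = gamma t (\<Inter>i\<in>I. F i) $ k"
    using assms k by (auto simp: gamma_nth prod_zero_iff)
  finally show "cprod (2^t) I (\<lambda>i. gamma t (F i)) $ k = gamma t (\<Inter>i\<in>I. F i) $ k" .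
qed (simp add: cprod_def gamma_def)

lemma half_Tplus_minus_tope: "(1/2) \<cdot>\<^sub>v (Tplus t - tope t F) = gamma t F"
  by (intro eq_vecI) (auto simp: Tplus_def tope_def gamma_def)

lemma vecmat_gamma_Ubar: "vecmat (gamma t F) (Ubar t) = gamma t {S. {1..t} - S \<in> F}"
proof (rule eq_vecI)
  fix j assume "j < dim_vec (gamma t {S. {1..t} - S \<in> F})"
  then have j: "j < 2^t"
    by (simp add: gamma_def)
  have "vecmat (gamma t F) (Ubar t) $ j
      = (\<Sum>i<2^t. gamma t F $ i * (if i + j = 2^t - 1 then 1 else 0))"
    using j by (simp add: vecmat_def Ubar_def scalar_prod_def gamma_def atLeast0LessThan)
  also have "\<dots> = (\<Sum>i<2^t. if i = 2^t - 1 - j then gamma t F $ i else 0)"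
    using j by (intro sum.cong) auto
  also have "\<dots> = gamma t F $ (2^t - 1 - j)"
    by (simp add: sum.delta')
  also have "\<dots> = gamma t {S. {1..t} - S \<in> F} $ j"
    using j kth_subset_complement[OF j] by (simp add: gamma_nth)
  finally show "vecmat (gamma t F) (Ubar t) $ j = gamma t {S. {1..t} - S \<in> F} $ j" .
qed (simp add: vecmat_def Ubar_def gamma_def)

lemma up_blocker_iff:
  assumes "D \<subseteq> {1..t}"
  shows "D \<in> up t (blocker t \<A>) \<longleftrightarrow> (\<forall>A\<in>\<A>. D \<inter> A \<noteq> {})"
proof
  assume "D \<in> up t (blocker t \<A>)"
  then obtain B where B: "B \<in> blocker t \<A>" "B \<subseteq> D"
    by (auto simp: up_def)
  from B(1) have "\<forall>A\<in>\<A>. B \<inter> A \<noteq> {}"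
    by (simp add: blocker_def)
  with B(2) show "\<forall>A\<in>\<A>. D \<inter> A \<noteq> {}"
    by blast
next
  assume D: "\<forall>A\<in>\<A>. D \<inter> A \<noteq> {}"
  let ?T = "{B. B \<subseteq> D \<and> (\<forall>A\<in>\<A>. B \<inter> A \<noteq> {})}"
  have "finite D"
    using assms by (rule finite_subset) simp
  then have "finite ?T"
    by (intro finite_subset[of ?T "Pow D"]) auto
  moreover have "?T \<noteq> {}"
    using D by blast
  ultimately obtain B
    where B: "B \<in> ?T" and minimal: "\<forall>B'\<in>?T. B' \<subseteq> B \<longrightarrow> B = B'"
    by (metis (no_types, lifting) finite_has_minimal)
  have "B \<in> blocker t \<A>"
    unfolding blocker_def
  proof (intro CollectI conjI allI impI)
    show "B \<subseteq> {1..t}"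
      using B assms by blast
    show "\<forall>A\<in>\<A>. B \<inter> A \<noteq> {}"
      using B by simp
    show "\<not> (\<forall>A\<in>\<A>. B' \<inter> A \<noteq> {})" if "B' \<subset> B" for B'
    proof
      assume "\<forall>A\<in>\<A>. B' \<inter> A \<noteq> {}"
      then have "B' \<in> ?T"
        using that B by auto
      then show False
        using minimal that by blast
    qed
  qed
  with B assms show "D \<in> up t (blocker t \<A>)"
    by (auto simp: up_def)
qed

lemma up_blocker_iff_compl_notin_up:
  assumes "\<forall>A\<in>\<A>. A \<subseteq> {1..t}" "S \<subseteq> {1..t}"
  shows "S \<in> up t (blocker t \<A>) \<longleftrightarrow> {1..t} - S \<notin> up t \<A>"
proof -
  have "S \<in> up t (blocker t \<A>) \<longleftrightarrow> (\<forall>A\<in>\<A>. S \<inter> A \<noteq> {})"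
    using assms(2) by (rule up_blocker_iff)
  also have "\<dots> \<longleftrightarrow> \<not> (\<exists>A\<in>\<A>. A \<subseteq> {1..t} - S)"
    using assms(1) by (simp add: Diff_eq disjoint_eq_subset_Compl Int_commute)
  also have "\<dots> \<longleftrightarrow> {1..t} - S \<notin> up t \<A>"
    by (simp add: up_def)
  finally show ?thesis .
qed

lemma cprod_Tplus_minus_cprod_up:
  assumes "finite \<A>" "\<forall>A\<in>\<A>. finite A"
  shows "cprod (2^t) \<A> (\<lambda>A. Tplus t - cprod (2^t) A (\<lambda>a. gamma t (up t {{a}})))
    = gamma t (- up t \<A>)"
proof -
  have "cprod (2^t) \<A> (\<lambda>A. Tplus t - cprod (2^t) A (\<lambda>a. gamma t (up t {{a}})))
      = cprod (2^t) \<A> (\<lambda>A. gamma t (- (\<Inter>a\<in>A. up t {{a}})))"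
    using assms(2) by (intro cprod_cong) (simp add: cprod_gamma Tplus_minus_gamma)
  also have "\<dots> = gamma t (\<Inter>A\<in>\<A>. - (\<Inter>a\<in>A. up t {{a}}))"
    using assms(1) by (rule cprod_gamma)
  also have "\<dots> = gamma t (- up t \<A>)"
    by (rule gamma_cong) (auto simp: up_def)
  finally show ?thesis .
qed

theorem corollary6p6:
  fixes t :: nat and \<A> :: "nat set set"
  assumes "t \<ge> 3" and "nontrivial_clutter t \<A>"
  shows "(gamma t (up t \<A>) =
           Tplus t - cprod (2^t) \<A> (\<lambda>A. Tplus t - cprod (2^t) A
              (\<lambda>a. (1/2) \<cdot>\<^sub>v (Tplus t - vecmat (xvec t (afrak t a)) (Mmat t)))))
         \<and> (gamma t (up t (blocker t \<A>)) =
           vecmat (cprod (2^t) \<A> (\<lambda>A. Tplus t - cprod (2^t) A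
              (\<lambda>a. (1/2) \<cdot>\<^sub>v (Tplus t - vecmat (xvec t (afrak t a)) (Mmat t))))) (Ubar t))"
proof -
  have family: "\<forall>A\<in>\<A>. A \<subseteq> {1..t}"
    using assms(2) by (simp add: nontrivial_clutter_def clutter_def)
  then have "finite \<A>"
    by (intro finite_subset[of \<A> "Pow {1..t}"]) auto
  moreover have "\<forall>A\<in>\<A>. finite A"
    using family by (blast intro: finite_subset[OF _ finite_atLeastAtMost])
  ultimately have avoiding:
    "cprod (2^t) \<A> (\<lambda>A. Tplus t - cprod (2^t) A (\<lambda>a. gamma t (up t {{a}})))
      = gamma t (- up t \<A>)"
    by (rule cprod_Tplus_minus_cprod_up)
  have singleton: "(\<lambda>a. (1/2) \<cdot>\<^sub>v (Tplus t - vecmat (xvec t (afrak t a)) (Mmat t)))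
      = (\<lambda>a. gamma t (up t {{a}}))"
    by (simp add: afrak_def vecmat_xvec tope_carrier half_Tplus_minus_tope)
  have "gamma t (up t \<A>) = Tplus t - gamma t (- up t \<A>)"
    by (simp add: Tplus_minus_gamma)
  moreover have "gamma t (up t (blocker t \<A>)) = vecmat (gamma t (- up t \<A>)) (Ubar t)"
    unfolding vecmat_gamma_Ubar using family
    by (intro gamma_cong) (simp add: up_blocker_iff_compl_notin_up)
  ultimately show ?thesis
    unfolding singleton avoiding by simp
qed

end
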